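(* Let $D$ be an integral domain with field of fractions $K$ and let $A$ be a $D$-algebra with standard assumptions. Assume that $A$ is an integral $D$-algebra of bounded degree. Then $\textnormal{Int}_K(A)\neq D[X]$ if and only if $\textnormal{Int}(D)\neq D[X]$. In particular, if $A$ is finitely generated as a $D$-module, then $\textnormal{Int}_K(A)\neq D[X]$ if and only if $\textnormal{Int}(D)\neq D[X]$.
   Context: A $D$-algebra $A$ (not necessarily commutative) satisfies the standard assumptions if it is torsion-free as a $D$-module and $A\cap K = D$, where $A$ and $K$ are identified with their images in $B=K\otimes_D A$. Polynomials in $K[X]$ are evaluated at elements of $A$ inside $B$. $\textnormal{Int}_K(A)=\{f\in K[X]\mid f(A)\subseteq A\}$ and $\textnormal{Int}(D)=\{f\in K[X]\mid f(D)\subseteq D\}$. $A$ is an integral algebra of bounded degree if there is $n$ such that every element of $A$ satisfies a monic polynomial in $D[X]$ of degree at most $n$. *)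

theory Defs
  imports "HOL-Computational_Algebra.Polynomial"
begin

text \<open>D is modelled as a subring of a field 'k which is its field of fractions K.\<close>

definition subring_of :: "'a::ring_1 set \<Rightarrow> bool" where
  "subring_of S \<longleftrightarrow> 0 \<in> S \<and> 1 \<in> S \<and>
     (\<forall>x\<in>S. \<forall>y\<in>S. x + y \<in> S \<and> x - y \<in> S \<and> x * y \<in> S)"

definition is_fraction_field_of :: "'k::field set \<Rightarrow> bool" where
  "is_fraction_field_of D \<longleftrightarrow> (\<forall>k. \<exists>a\<in>D. \<exists>b\<in>D. b \<noteq> 0 \<and> k = a / b)"

text \<open>phi makes the ring 'b a (not necessarily commutative) K-algebra: a ring
  homomorphism K -> B with central image.\<close>
definition central_alg_map :: "('k::field \<Rightarrow> 'b::ring_1) \<Rightarrow> bool" where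
  "central_alg_map \<phi> \<longleftrightarrow> \<phi> 0 = 0 \<and> \<phi> 1 = 1 \<and>
     (\<forall>x y. \<phi> (x + y) = \<phi> x + \<phi> y \<and> \<phi> (x * y) = \<phi> x * \<phi> y) \<and>
     (\<forall>k b. \<phi> k * b = b * \<phi> k)"

definition peval :: "('k::field \<Rightarrow> 'b::ring_1) \<Rightarrow> 'k poly \<Rightarrow> 'b \<Rightarrow> 'b" where
  "peval \<phi> f b = (\<Sum>i\<le>degree f. \<phi> (coeff f i) * b ^ i)"

text \<open>Standard assumptions: A is a D-subalgebra of the K-algebra B = K \<otimes>_D A,
  A is torsion-free over D, and A \<inter> K = D.\<close>
definition standard_assumptions ::
    "'k::field set \<Rightarrow> ('k \<Rightarrow> 'b::ring_1) \<Rightarrow> 'b set \<Rightarrow> bool" where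
  "standard_assumptions D \<phi> A \<longleftrightarrow>
     subring_of A \<and> \<phi> ` D \<subseteq> A \<and>
     (\<forall>d\<in>D. \<forall>a\<in>A. d \<noteq> 0 \<longrightarrow> \<phi> d * a = 0 \<longrightarrow> a = 0) \<and>
     (\<forall>b. \<exists>k a. a \<in> A \<and> b = \<phi> k * a) \<and>
     {k. \<phi> k \<in> A} = D"

definition poly_over :: "'k::field set \<Rightarrow> 'k poly set" where
  "poly_over D = {f. \<forall>i. coeff f i \<in> D}"

definition Int_K :: "('k::field \<Rightarrow> 'b::ring_1) \<Rightarrow> 'b set \<Rightarrow> 'k poly set" where
  "Int_K \<phi> A = {f. \<forall>a\<in>A. peval \<phi> f a \<in> A}"

definition Int_D :: "'k::field set \<Rightarrow> 'k poly set" where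
  "Int_D D = {f. \<forall>d\<in>D. poly f d \<in> D}"

definition integral_bounded_degree ::
    "'k::field set \<Rightarrow> ('k \<Rightarrow> 'b::ring_1) \<Rightarrow> 'b set \<Rightarrow> bool" where
  "integral_bounded_degree D \<phi> A \<longleftrightarrow>
     (\<exists>n. \<forall>a\<in>A. \<exists>p. p \<in> poly_over D \<and> lead_coeff p = 1 \<and> degree p \<le> n \<and> peval \<phi> p a = 0)"

definition fin_gen_module ::
    "'k::field set \<Rightarrow> ('k \<Rightarrow> 'b::ring_1) \<Rightarrow> 'b set \<Rightarrow> bool" where
  "fin_gen_module D \<phi> A \<longleftrightarrow>
     (\<exists>S. finite S \<and> S \<subseteq> A \<and>
        (\<forall>a\<in>A. \<exists>c. (\<forall>s\<in>S. c s \<in> D) \<and> a = (\<Sum>s\<in>S. \<phi> (c s) * s)))"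

end

theory Submission
  imports Defs "HOL-Library.FuncSet"
begin

text \<open>
  Since \<open>D[X] \<subseteq> Int\<^sub>K(A)\<close> and evaluation at \<open>D \<subseteq> A\<close> gives \<open>Int\<^sub>K(A) \<subseteq> Int(D)\<close>, only
  \<open>Int(D) \<noteq> D[X] \<Longrightarrow> Int\<^sub>K(A) \<noteq> D[X]\<close> needs an argument. Let \<open>f \<in> Int(D) - D[X]\<close> have minimal
  degree \<open>k\<close> and leading coefficient \<open>u\<close>; then \<open>u \<notin> D\<close>, and evaluating \<open>f\<close> at \<open>k + 1\<close> points
  and clearing the Vandermonde determinant shows that the ideal \<open>J = {x \<in> D. u x \<in> D}\<close> contains
  a positive integer \<open>c\<close> and all values \<open>T(r)\<close>, \<open>r \<in> D\<close>, of a monic integer polynomial \<open>T\<close>.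

  In both cases of the theorem every \<open>a \<in> A\<close> acts on a \<open>D\<close>-module spanned by at most \<open>R\<close>
  elements \<open>s\<^sub>l \<in> A\<close> containing \<open>1\<close> (a generating set, or \<open>1, a, a\<^sup>2, \<dots>\<close> via the companion matrix),
  with a uniform bound \<open>R\<close>. The coordinates of all powers \<open>a\<^sup>j\<close> then lie in \<open>\<int>[G]\<close> for the
  finite set \<open>G\<close> of matrix entries, and \<open>\<int>[G]\<close> has at most \<open>c ^ (deg T ^ |G|)\<close> classes modulo
  \<open>J\<close>. By pigeonhole \<open>u (a\<^sup>j - a\<^sup>i) \<in> A\<close> for some \<open>i < j \<le> N\<close>, with \<open>N\<close> depending only on \<open>R\<close>,
  hence \<open>u (X ^ (N + N!) - X ^ N) \<in> Int\<^sub>K(A) - D[X]\<close>.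
\<close>

lemma subring_of_zero: "subring_of S \<Longrightarrow> (0::'a::ring_1) \<in> S"
  and subring_of_one: "subring_of S \<Longrightarrow> (1::'a::ring_1) \<in> S"
  and subring_of_add: "subring_of S \<Longrightarrow> x \<in> S \<Longrightarrow> y \<in> S \<Longrightarrow> x + y \<in> S"
  and subring_of_diff: "subring_of S \<Longrightarrow> x \<in> S \<Longrightarrow> y \<in> S \<Longrightarrow> x - y \<in> S"
  and subring_of_mult: "subring_of S \<Longrightarrow> x \<in> S \<Longrightarrow> y \<in> S \<Longrightarrow> x * y \<in> S"
  by (simp_all add: subring_of_def)

lemma subring_of_uminus: "subring_of S \<Longrightarrow> x \<in> S \<Longrightarrow> - x \<in> S"
  using subring_of_diff[of S 0 x] subring_of_zero[of S] by simp

lemma subring_of_sum: "subring_of S \<Longrightarrow> (\<And>i. i \<in> I \<Longrightarrow> f i \<in> S) \<Longrightarrow> sum f I \<in> S"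
  by (induction I rule: infinite_finite_induct) (auto simp: subring_of_zero subring_of_add)

lemma subring_of_prod: "subring_of S \<Longrightarrow> (\<And>i. i \<in> I \<Longrightarrow> f i \<in> S) \<Longrightarrow> prod f I \<in> S"
  by (induction I rule: infinite_finite_induct) (auto simp: subring_of_one subring_of_mult)

lemma subring_of_power: "subring_of S \<Longrightarrow> x \<in> S \<Longrightarrow> x ^ n \<in> S"
  by (induction n) (auto simp: subring_of_one subring_of_mult)

lemma subring_of_of_nat: "subring_of S \<Longrightarrow> of_nat n \<in> S"
  by (induction n) (auto simp: subring_of_zero subring_of_one subring_of_add)

lemma subring_of_Ints:
  assumes "subring_of S" and "x \<in> \<int>"
  shows "x \<in> S"
proof -
  obtain z where "x = of_int z" using assms(2) by (auto elim: Ints_cases)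
  then show ?thesis
    using assms(1) by (cases z rule: int_cases2) (auto intro: subring_of_of_nat subring_of_uminus)
qed

context
  fixes \<phi> :: "'k::field \<Rightarrow> 'b::ring_1"
  assumes \<phi>: "central_alg_map \<phi>"
begin

lemma central_alg_map_zero: "\<phi> 0 = 0"
  and central_alg_map_one: "\<phi> 1 = 1"
  and central_alg_map_add: "\<phi> (x + y) = \<phi> x + \<phi> y"
  and central_alg_map_mult: "\<phi> (x * y) = \<phi> x * \<phi> y"
  and central_alg_map_commute: "\<phi> x * b = b * \<phi> x"
  using \<phi> unfolding central_alg_map_def by blast+

lemma central_alg_map_uminus: "\<phi> (- x) = - \<phi> x"
proof -
  have "\<phi> x + \<phi> (- x) = 0"
    using central_alg_map_add[of x "- x"] by (simp add: central_alg_map_zero)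
  from minus_unique[OF this] show ?thesis by simp
qed

lemma central_alg_map_diff: "\<phi> (x - y) = \<phi> x - \<phi> y"
  using central_alg_map_add[of x "- y"] by (simp add: central_alg_map_uminus)

lemma central_alg_map_sum: "\<phi> (sum f I) = (\<Sum>i\<in>I. \<phi> (f i))"
  by (induction I rule: infinite_finite_induct) (auto simp: central_alg_map_zero central_alg_map_add)

lemma central_alg_map_power: "\<phi> (x ^ n) = \<phi> x ^ n"
  by (induction n) (auto simp: central_alg_map_one central_alg_map_mult)

lemma peval_conv_sum:
  assumes "degree f \<le> n"
  shows "peval \<phi> f a = (\<Sum>i\<le>n. \<phi> (coeff f i) * a ^ i)"
proof -
  have "(\<Sum>i\<le>n. \<phi> (coeff f i) * a ^ i) = (\<Sum>i\<le>degree f. \<phi> (coeff f i) * a ^ i)"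
    using assms by (intro sum.mono_neutral_right) (auto simp: coeff_eq_0 central_alg_map_zero)
  then show ?thesis by (simp add: peval_def)
qed

lemma peval_central: "peval \<phi> f (\<phi> d) = \<phi> (poly f d)"
  unfolding peval_def poly_altdef central_alg_map_sum
  by (simp add: central_alg_map_mult central_alg_map_power)

lemma peval_monom_diff:
  assumes "n < m"
  shows "peval \<phi> (monom u m - monom u n) a = \<phi> u * (a ^ m - a ^ n)"
proof -
  have "degree (monom u m - monom u n) \<le> m"
    using assms by (intro degree_diff_le order.trans[OF degree_monom_le]) auto
  then have "peval \<phi> (monom u m - monom u n) a
      = (\<Sum>i\<le>m. (if i = m then \<phi> u * a ^ i else 0) - (if i = n then \<phi> u * a ^ i else 0))"
    by (auto simp: peval_conv_sum central_alg_map_diff central_alg_map_zero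
        left_diff_distrib intro!: sum.cong)
  also have "\<dots> = \<phi> u * (a ^ m - a ^ n)"
    using assms by (simp add: sum_subtractf right_diff_distrib)
  finally show ?thesis .
qed

lemma degree_pos_if_peval_monic_eq_0:
  assumes "lead_coeff p = 1" and "peval \<phi> p a = 0"
  shows "degree p > 0"
proof (rule ccontr)
  assume "\<not> degree p > 0"
  then have "peval \<phi> p a = 1" using assms(1) by (simp add: peval_def central_alg_map_one)
  with assms(2) show False by simp
qed

lemma power_degree_if_peval_monic_eq_0:
  assumes "lead_coeff p = 1" and "peval \<phi> p a = 0"
  shows "a ^ degree p = (\<Sum>l<degree p. \<phi> (- coeff p l) * a ^ l)"
proof -
  have "0 = (\<Sum>i<degree p. \<phi> (coeff p i) * a ^ i) + a ^ degree p"
    using assms central_alg_map_one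
    by (simp add: peval_def lessThan_Suc_atMost[symmetric] del: lessThan_Suc_atMost)
  then show ?thesis
    by (simp add: central_alg_map_uminus sum_negf eq_neg_iff_add_eq_0 add.commute)
qed

end

lemma poly_over_subset_Int_K:
  assumes "subring_of A" and "\<phi> ` D \<subseteq> A"
  shows "poly_over D \<subseteq> Int_K \<phi> A"
  using assms unfolding Int_K_def peval_def poly_over_def
  by (auto intro!: subring_of_sum subring_of_mult subring_of_power)

lemma Int_K_subset_Int_D:
  assumes "central_alg_map \<phi>" and "\<phi> ` D \<subseteq> A" and "{k. \<phi> k \<in> A} = D"
  shows "Int_K \<phi> A \<subseteq> Int_D D"
proof
  fix f assume f: "f \<in> Int_K \<phi> A"
  show "f \<in> Int_D D"
    unfolding Int_D_def
  proof (intro CollectI ballI)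
    fix d assume "d \<in> D"
    then have "peval \<phi> f (\<phi> d) \<in> A" using f assms(2) by (auto simp: Int_K_def)
    then show "poly f d \<in> D" using assms(3) peval_central[OF assms(1)] by auto
  qed
qed

lemma poly_over_subset_Int_D:
  assumes "subring_of D"
  shows "poly_over D \<subseteq> Int_D D"
  using assms unfolding Int_D_def poly_over_def poly_altdef
  by (auto intro!: subring_of_sum subring_of_mult subring_of_power)



text \<open>\<open>vandermonde_prod k y = (\<Prod>0 \<le> i < j \<le> k. y j - y i)\<close>, the Vandermonde determinant.\<close>
fun vandermonde_prod :: "nat \<Rightarrow> (nat \<Rightarrow> 'a::comm_ring_1) \<Rightarrow> 'a" where
  "vandermonde_prod 0 y = 1"
| "vandermonde_prod (Suc k) y =
     (\<Prod>j\<in>{1..Suc k}. y j - y 0) * vandermonde_prod k (\<lambda>j. y (Suc j))"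

lemma poly_synthetic_div_split:
  "poly f x = (x - c) * poly (synthetic_div f c) x + poly f (c::'a::comm_ring_1)"
proof -
  have "poly ([:- c, 1:] * synthetic_div f c + [:poly f c:]) x = poly f x"
    by (subst synthetic_div_correct') simp
  then show ?thesis by (simp add: algebra_simps)
qed

lemma coeff_synthetic_div_top:
  assumes "degree f \<le> Suc k"
  shows "coeff (synthetic_div f (c::'a::comm_ring_1)) k = coeff f (Suc k)"
proof -
  have "coeff (f + smult c (synthetic_div f c)) (Suc k) = coeff (pCons (poly f c) (synthetic_div f c)) (Suc k)"
    by (subst synthetic_div_correct) simp
  moreover have "degree (synthetic_div f c) \<le> k" using assms by (simp add: degree_synthetic_div)
  ultimately show ?thesis by (simp add: coeff_eq_0)
qed

lemma coeff_mult_vandermonde_prod_in_subring: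
  fixes D :: "'a::comm_ring_1 set"
  assumes "subring_of D" and "degree f \<le> k" and "\<forall>j\<le>k. y j \<in> D" and "\<forall>j\<le>k. poly f (y j) \<in> D"
  shows "coeff f k * vandermonde_prod k y \<in> D"
  using assms(2-)
proof (induction k arbitrary: f y)
  case 0
  then show ?case by (simp add: poly_altdef)
next
  case (Suc k)
  define q where "q = synthetic_div f (y 0)"
  have f_split: "poly f x = (x - y 0) * poly q x + poly f (y 0)" for x
    unfolding q_def by (rule poly_synthetic_div_split)
  have deg_q: "degree q \<le> k"
    using Suc.prems(1) by (simp add: q_def degree_synthetic_div)
  have coeff_q: "coeff q k = coeff f (Suc k)"
    unfolding q_def by (rule coeff_synthetic_div_top[OF Suc.prems(1)])
  define w where "w = (\<Prod>j\<in>{1..Suc k}. y j - y 0)"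
  have "coeff (smult w q) k * vandermonde_prod k (\<lambda>j. y (Suc j)) \<in> D"
  proof (rule Suc.IH)
    show "degree (smult w q) \<le> k" using deg_q degree_smult_le order_trans by blast
    show "\<forall>j\<le>k. y (Suc j) \<in> D" using Suc.prems(2) by auto
    show "\<forall>j\<le>k. poly (smult w q) (y (Suc j)) \<in> D"
    proof (intro allI impI)
      fix j assume "j \<le> k"
      then have w_split: "w = (y (Suc j) - y 0) * (\<Prod>i\<in>{1..Suc k} - {Suc j}. y i - y 0)"
        unfolding w_def by (intro prod.remove) auto
      have "poly (smult w q) (y (Suc j))
          = ((y (Suc j) - y 0) * poly q (y (Suc j))) * (\<Prod>i\<in>{1..Suc k} - {Suc j}. y i - y 0)"
        by (simp only: poly_smult w_split mult_ac)
      also have "\<dots> = (poly f (y (Suc j)) - poly f (y 0)) * (\<Prod>i\<in>{1..Suc k} - {Suc j}. y i - y 0)"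
        using f_split[of "y (Suc j)"] by simp
      also have "\<dots> \<in> D"
        using Suc.prems(2,3) \<open>j \<le> k\<close> assms(1)
        by (intro subring_of_mult subring_of_diff subring_of_prod) auto
      finally show "poly (smult w q) (y (Suc j)) \<in> D" .
    qed
  qed
  also have "coeff (smult w q) k * vandermonde_prod k (\<lambda>j. y (Suc j))
      = coeff f (Suc k) * vandermonde_prod (Suc k) y"
    by (simp only: vandermonde_prod.simps coeff_smult coeff_q w_def mult_ac)
  finally show ?case .
qed

lemma poly_vandermonde_prod:
  "poly (vandermonde_prod k y) r = vandermonde_prod k (\<lambda>j. poly (y j) r)"
  by (induction k arbitrary: y) (simp_all add: poly_prod)

lemma vandermonde_prod_of_nat:
  "\<exists>n>0. vandermonde_prod k (\<lambda>j. of_nat (j + m)) = (of_nat n :: 'a::comm_ring_1)"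
proof (induction k arbitrary: m)
  case 0
  show ?case by (intro exI[of _ 1]) simp
next
  case (Suc k)
  obtain n where "n > 0" and n: "vandermonde_prod k (\<lambda>j. of_nat (Suc j + m)) = (of_nat n :: 'a)"
    using Suc.IH[of "Suc m"] by auto
  have "(\<Prod>j\<in>{1..Suc k}. of_nat (j + m) - of_nat (0 + m)) = (of_nat (fact (Suc k)) :: 'a)"
    by (simp add: fact_prod algebra_simps)
  then have "vandermonde_prod (Suc k) (\<lambda>j. of_nat (j + m)) = (of_nat (fact (Suc k) * n) :: 'a)"
    by (simp only: vandermonde_prod.simps n of_nat_mult)
  then show ?case using \<open>n > 0\<close> by (intro exI[of _ "fact (Suc k) * n"]) simp
qed

definition has_int_coeffs :: "'a::ring_1 poly \<Rightarrow> bool" where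
  "has_int_coeffs p \<longleftrightarrow> (\<forall>i. coeff p i \<in> \<int>)"

lemma has_int_coeffs_vandermonde_monom:
  "has_int_coeffs (vandermonde_prod k (\<lambda>j. monom (1::'a::comm_ring_1) (j + m)))"
proof (induction k arbitrary: m)
  case 0
  then show ?case by (simp add: has_int_coeffs_def coeff_1)
next
  case (Suc k)
  have int_mult: "has_int_coeffs (p * q)" if "has_int_coeffs p" "has_int_coeffs q" for p q :: "'a poly"
    using that unfolding has_int_coeffs_def coeff_mult by (auto intro!: Ints_sum Ints_mult)
  have int_prod: "has_int_coeffs (prod f I)" if "\<And>i. has_int_coeffs (f i)" for f :: "nat \<Rightarrow> 'a poly" and I
    using that by (induction I rule: infinite_finite_induct)
      (auto intro!: int_mult simp: has_int_coeffs_def[of 1] coeff_1)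
  have factor: "has_int_coeffs (monom (1::'a) (j + m) - monom 1 (0 + m))" for j
    by (auto simp: has_int_coeffs_def coeff_monom)
  have "has_int_coeffs (vandermonde_prod k (\<lambda>j. monom (1::'a) (Suc j + m)))"
    using Suc.IH[of "Suc m"] by simp
  then show ?case
    unfolding vandermonde_prod.simps by (intro int_mult int_prod factor)
qed

lemma lead_coeff_vandermonde_monom:
  "lead_coeff (vandermonde_prod k (\<lambda>j. monom (1::'a::idom) (j + m))) = 1"
proof (induction k arbitrary: m)
  case 0
  then show ?case by simp
next
  case (Suc k)
  have factor: "lead_coeff (monom (1::'a) (j + m) - monom 1 (0 + m)) = 1" if "j \<ge> 1" for j
  proof -
    have "lead_coeff (- monom (1::'a) m + monom 1 (j + m)) = 1"
      using that by (subst lead_coeff_add_le) (auto simp: degree_monom_eq)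
    then show ?thesis by simp
  qed
  have "lead_coeff (\<Prod>j\<in>{1..Suc k}. monom (1::'a) (j + m) - monom 1 (0 + m)) = 1"
    unfolding lead_coeff_prod by (intro prod.neutral ballI factor) simp
  then show ?case
    using Suc.IH[of "Suc m"] by (simp only: vandermonde_prod.simps lead_coeff_mult add_Suc_shift) simp
qed

lemma lead_coeff_notin_if_minimal:
  assumes D: "subring_of D" and f: "f \<in> Int_D D - poly_over D"
    and minimal: "\<And>g. g \<in> Int_D D - poly_over D \<Longrightarrow> degree f \<le> degree g"
  shows "lead_coeff f \<notin> D"
proof
  assume lc: "lead_coeff f \<in> D"
  define g where "g = f - monom (lead_coeff f) (degree f)"
  have "g \<in> Int_D D"
    using f lc D by (auto simp: Int_D_def g_def poly_monom intro!: subring_of_diff subring_of_mult subring_of_power)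
  moreover have "g \<notin> poly_over D"
  proof
    assume "g \<in> poly_over D"
    have "coeff f i \<in> D" for i
    proof -
      have "coeff f i = coeff g i + coeff (monom (lead_coeff f) (degree f)) i" by (simp add: g_def)
      moreover have "coeff (monom (lead_coeff f) (degree f)) i \<in> D"
        using lc D by (auto simp: subring_of_zero)
      ultimately show ?thesis
        using \<open>g \<in> poly_over D\<close> D by (simp add: poly_over_def subring_of_add)
    qed
    with f show False by (auto simp: poly_over_def)
  qed
  ultimately have "degree f \<le> degree g" using minimal by blast
  moreover have "g \<noteq> 0" using \<open>g \<notin> poly_over D\<close> D by (auto simp: poly_over_def subring_of_zero)
  moreover have "degree g \<le> degree f" unfolding g_def by (meson degree_diff_le degree_monom_le order_refl)
  moreover have "coeff g (degree f) = 0" by (simp add: g_def)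
  ultimately show False by (metis le_antisym leading_coeff_0_iff)
qed

locale denominator_witness =
  fixes D :: "'k::field set" and u :: 'k and c :: nat and T :: "'k poly"
  assumes subring: "subring_of D"
    and u_notin: "u \<notin> D"
    and c_pos: "c > 0"
    and u_mult_c: "u * of_nat c \<in> D"
    and T_int: "has_int_coeffs T"
    and T_monic: "lead_coeff T = 1"
    and u_mult_T: "\<forall>r\<in>D. u * poly T r \<in> D"

lemma denominator_witness_if_Int_D_neq_poly_over:
  fixes D :: "'k::field set"
  assumes D: "subring_of D" and "Int_D D \<noteq> poly_over D"
  shows "\<exists>u c T. denominator_witness D u c T"
proof -
  have "poly_over D \<subseteq> Int_D D" by (rule poly_over_subset_Int_D[OF D])
  with assms(2) obtain f0 where "f0 \<in> Int_D D - poly_over D" by blast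
  then obtain f where f: "f \<in> Int_D D - poly_over D"
    and minimal: "\<And>g. g \<in> Int_D D - poly_over D \<Longrightarrow> degree f \<le> degree g"
    using ex_has_least_nat[of "\<lambda>g. g \<in> Int_D D - poly_over D" f0 degree] by blast
  define k where "k = degree f"
  define T :: "'k poly" where "T = vandermonde_prod k (\<lambda>j. monom 1 j)"
  have f_values: "\<forall>j\<le>k. poly f (y j) \<in> D" if "\<forall>j\<le>k. y j \<in> D" for y
    using f that by (auto simp: Int_D_def)
  have vdm: "lead_coeff f * vandermonde_prod k y \<in> D" if "\<forall>j\<le>k. y j \<in> D" for y
    using coeff_mult_vandermonde_prod_in_subring[OF D _ that f_values[OF that]] by (simp add: k_def)
  obtain c where "c > 0" and "vandermonde_prod k of_nat = (of_nat c :: 'k)"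
    using vandermonde_prod_of_nat[of k 0] by auto
  then have "lead_coeff f * of_nat c \<in> D"
    using vdm[of of_nat] D by (simp add: subring_of_of_nat)
  moreover have "lead_coeff f * poly T r \<in> D" if "r \<in> D" for r
    using vdm[of "\<lambda>j. r ^ j"] that D
    by (simp add: T_def poly_vandermonde_prod poly_monom subring_of_power)
  moreover have "has_int_coeffs T" and "lead_coeff T = 1"
    unfolding T_def
    using has_int_coeffs_vandermonde_monom[of k 0] lead_coeff_vandermonde_monom[of k 0] by simp_all
  ultimately have "denominator_witness D (lead_coeff f) c T"
    using D lead_coeff_notin_if_minimal[OF D f minimal] \<open>c > 0\<close>
    by unfold_locales auto
  then show ?thesis by blast
qed

lemma (in denominator_witness) degree_T_pos: "degree T > 0"
proof (rule ccontr)
  assume "\<not> degree T > 0"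
  then have "poly T 0 = 1" using T_monic by (simp add: poly_altdef)
  then show False using u_mult_T subring_of_zero[OF subring] u_notin by force
qed

text \<open>Elements of \<open>\<int>[G]\<close> reduce modulo \<open>J\<close> (\<open>x \<equiv> y\<close> iff \<open>u (x - y) \<in> D\<close>) to integer combinations
  of the monomials whose exponents stay below \<open>degree T\<close>; \<open>reducible x\<close> says that \<open>x\<close> has such a
  reduction, and \<open>reduced\<close> is the finite set of those with coefficients in \<open>[0, c)\<close>.\<close>
locale monomial_reduction = denominator_witness +
  fixes G :: "'k::field set"
  assumes finite_G: "finite G" and G_subset: "G \<subseteq> D"
begin

definition exponents :: "('k \<Rightarrow> nat) set" where
  "exponents = PiE G (\<lambda>_. {..<degree T})"

definition monomial :: "('k \<Rightarrow> nat) \<Rightarrow> 'k" where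
  "monomial \<beta> = (\<Prod>x\<in>G. x ^ \<beta> x)"

definition int_comb :: "(('k \<Rightarrow> nat) \<Rightarrow> int) \<Rightarrow> 'k" where
  "int_comb n = (\<Sum>\<beta>\<in>exponents. of_int (n \<beta>) * monomial \<beta>)"

definition reduced :: "'k set" where
  "reduced = int_comb ` PiE exponents (\<lambda>_. {0..<int c})"

definition reducible :: "'k \<Rightarrow> bool" where
  "reducible x \<longleftrightarrow> (\<exists>n. u * (x - int_comb n) \<in> D)"

lemma finite_exponents: "finite exponents"
  unfolding exponents_def using finite_G by (simp add: finite_PiE)

lemma monomial_in_D: "monomial \<beta> \<in> D"
  unfolding monomial_def using G_subset subring
  by (intro subring_of_prod subring_of_power) auto

lemma int_comb_in_D: "int_comb n \<in> D"
  unfolding int_comb_def using subring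
  by (intro subring_of_sum subring_of_mult[OF subring] monomial_in_D subring_of_Ints[OF subring]) auto

lemma finite_reduced: "finite reduced"
  unfolding reduced_def using finite_exponents by (simp add: finite_PiE)

lemma card_reduced: "card reduced \<le> c ^ (degree T ^ card G)"
proof -
  have "card reduced \<le> card (PiE exponents (\<lambda>_. {0..<int c}))"
    unfolding reduced_def using finite_exponents by (intro card_image_le) (simp add: finite_PiE)
  also have "\<dots> = c ^ (degree T ^ card G)"
    using finite_exponents finite_G by (simp add: card_PiE exponents_def)
  finally show ?thesis .
qed

lemma reducible_shift: "reducible x \<Longrightarrow> u * (y - x) \<in> D \<Longrightarrow> reducible y"
proof -
  assume "reducible x" and y: "u * (y - x) \<in> D"
  then obtain n where n: "u * (x - int_comb n) \<in> D" unfolding reducible_def by blast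
  have "u * (y - int_comb n) = u * (y - x) + u * (x - int_comb n)" by (simp add: algebra_simps)
  then have "u * (y - int_comb n) \<in> D" using y n subring_of_add[OF subring] by simp
  then show ?thesis unfolding reducible_def by blast
qed

lemma reducible_int_comb: "reducible (int_comb n)"
  unfolding reducible_def using subring_of_zero[OF subring] by (intro exI[of _ n]) simp

lemma int_comb_add: "int_comb (\<lambda>\<beta>. n \<beta> + m \<beta>) = int_comb n + int_comb m"
  by (simp add: int_comb_def sum.distrib distrib_right)

lemma int_comb_mult: "int_comb (\<lambda>\<beta>. z * n \<beta>) = of_int z * int_comb n"
  by (simp add: int_comb_def sum_distrib_left mult.assoc)

lemma reducible_add: "reducible x \<Longrightarrow> reducible y \<Longrightarrow> reducible (x + y)"
proof -
  assume "reducible x" "reducible y"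
  then obtain n m where "u * (x - int_comb n) \<in> D" "u * (y - int_comb m) \<in> D"
    unfolding reducible_def by blast
  moreover have "u * ((x + y) - int_comb (\<lambda>\<beta>. n \<beta> + m \<beta>))
      = u * (x - int_comb n) + u * (y - int_comb m)"
    unfolding int_comb_add by (simp add: algebra_simps)
  ultimately have "u * ((x + y) - int_comb (\<lambda>\<beta>. n \<beta> + m \<beta>)) \<in> D"
    using subring_of_add[OF subring] by simp
  then show ?thesis unfolding reducible_def by blast
qed

lemma reducible_Ints_mult:
  assumes "z \<in> \<int>" and "reducible x"
  shows "reducible (z * x)"
proof -
  obtain i where z: "z = of_int i" using assms(1) by (rule Ints_cases)
  obtain n where n: "u * (x - int_comb n) \<in> D" using assms(2) unfolding reducible_def by blast
  have "u * (z * x - int_comb (\<lambda>\<beta>. i * n \<beta>)) = z * (u * (x - int_comb n))"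
    unfolding int_comb_mult z by (simp only: right_diff_distrib mult.left_commute)
  also have "\<dots> \<in> D"
    by (rule subring_of_mult[OF subring subring_of_Ints[OF subring assms(1)] n])
  finally show ?thesis unfolding reducible_def by blast
qed

lemma reducible_zero: "reducible 0"
  using reducible_int_comb[of "\<lambda>_. 0"] by (simp add: int_comb_def)

lemma reducible_sum: "(\<And>i. i \<in> I \<Longrightarrow> reducible (f i)) \<Longrightarrow> reducible (sum f I)"
  by (induction I rule: infinite_finite_induct) (auto simp: reducible_zero reducible_add)

lemma reducible_monomial:
  assumes "\<beta> \<in> exponents"
  shows "reducible (monomial \<beta>)"
proof -
  have "int_comb (\<lambda>\<beta>'. if \<beta>' = \<beta> then 1 else 0) = (\<Sum>\<beta>'\<in>exponents. if \<beta>' = \<beta> then monomial \<beta>' else 0)"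
    unfolding int_comb_def by (intro sum.cong) auto
  also have "\<dots> = monomial \<beta>" using assms finite_exponents by simp
  finally show ?thesis using reducible_int_comb by metis
qed

lemma reducible_one: "reducible 1"
proof -
  have "restrict (\<lambda>_. 0) G \<in> exponents" using degree_T_pos by (auto simp: exponents_def)
  moreover have "monomial (restrict (\<lambda>_. 0) G) = 1" by (simp add: monomial_def)
  ultimately show ?thesis using reducible_monomial by metis
qed

lemma poly_T_split: "poly T x = (\<Sum>i<degree T. coeff T i * x ^ i) + x ^ degree T"
  using T_monic by (simp add: poly_altdef lessThan_Suc_atMost[symmetric] del: lessThan_Suc_atMost)

text \<open>The monic relation \<open>T g \<equiv> 0\<close> lowers an exponent that reaches \<open>degree T\<close>.\<close>
lemma reducible_monomial_mult:
  assumes \<beta>: "\<beta> \<in> exponents" and g: "g \<in> G"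
  shows "reducible (monomial \<beta> * g)"
proof -
  define P where "P = (\<Prod>x\<in>G-{g}. x ^ \<beta> x)"
  have monomial_upd: "monomial (\<beta>(g := i)) = g ^ i * P" for i
  proof -
    have "(\<Prod>x\<in>G-{g}. x ^ (\<beta>(g := i)) x) = P" unfolding P_def by (rule prod.cong) auto
    then show ?thesis
      unfolding monomial_def using g finite_G by (simp add: prod.remove)
  qed
  have upd_exponents: "\<beta>(g := i) \<in> exponents" if "i < degree T" for i
    using PiE_fun_upd[of i "\<lambda>_. {..<degree T}" g \<beta> G] \<beta> g that
    by (simp add: exponents_def insert_absorb)
  have \<beta>g: "\<beta> g < degree T" using \<beta> g by (auto simp: exponents_def)
  have prod_eq: "monomial \<beta> * g = g ^ Suc (\<beta> g) * P"
    using monomial_upd[of "\<beta> g"] by (simp add: mult_ac)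
  show ?thesis
  proof (cases "Suc (\<beta> g) < degree T")
    case True
    then show ?thesis
      using reducible_monomial[OF upd_exponents[OF True]] by (simp add: prod_eq monomial_upd)
  next
    case False
    with \<beta>g have top: "Suc (\<beta> g) = degree T" by simp
    define R where "R = (\<Sum>i<degree T. coeff T i * monomial (\<beta>(g := i)))"
    have "reducible (- R)"
      unfolding R_def sum_negf[symmetric] minus_mult_left
      using T_int upd_exponents
      by (intro reducible_sum reducible_Ints_mult reducible_monomial) (auto simp: has_int_coeffs_def)
    moreover have "u * (monomial \<beta> * g - - R) = P * (u * poly T g)"
      unfolding prod_eq top poly_T_split R_def monomial_upd
      by (simp add: algebra_simps sum_distrib_left sum_distrib_right)
    moreover have "P \<in> D"
      unfolding P_def using G_subset subring by (intro subring_of_prod subring_of_power) auto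
    then have "P * (u * poly T g) \<in> D"
      using u_mult_T g G_subset subring_of_mult[OF subring] by blast
    ultimately show ?thesis by (metis reducible_shift)
  qed
qed

lemma reducible_mult:
  assumes "reducible x" and "g \<in> G"
  shows "reducible (x * g)"
proof -
  obtain n where n: "u * (x - int_comb n) \<in> D" using assms(1) unfolding reducible_def by blast
  have "reducible (int_comb n * g)"
    unfolding int_comb_def sum_distrib_right mult.assoc
    using assms(2) by (intro reducible_sum reducible_Ints_mult reducible_monomial_mult) auto
  moreover have "u * (x * g - int_comb n * g) = u * (x - int_comb n) * g"
    by (simp add: algebra_simps)
  moreover have "u * (x - int_comb n) * g \<in> D"
    using n assms(2) G_subset subring_of_mult[OF subring] by blast
  ultimately show ?thesis by (metis reducible_shift)
qed

text \<open>Since \<open>u c \<in> D\<close>, integer coefficients only matter modulo \<open>c\<close>.\<close>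
lemma reducible_imp_reduced:
  assumes "reducible x"
  shows "\<exists>e\<in>reduced. u * (x - e) \<in> D"
proof -
  obtain n where n: "u * (x - int_comb n) \<in> D" using assms unfolding reducible_def by blast
  define m where "m = restrict (\<lambda>\<beta>. n \<beta> mod int c) exponents"
  have "m \<in> PiE exponents (\<lambda>_. {0..<int c})"
    using c_pos by (auto simp: m_def)
  then have "int_comb m \<in> reduced" unfolding reduced_def by blast
  have "int_comb n - int_comb m = of_nat c * int_comb (\<lambda>\<beta>. n \<beta> div int c)"
  proof -
    have "of_int (n \<beta>) - of_int (m \<beta>) = (of_nat c * of_int (n \<beta> div int c) :: 'k)"
      if "\<beta> \<in> exponents" for \<beta>
      using that div_mult_mod_eq[of "n \<beta>" "int c"] unfolding m_def
      by (metis (no_types, lifting) add_diff_cancel_right' mult.commute of_int_add of_int_mult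
          of_int_of_nat_eq restrict_apply)
    then show ?thesis
      unfolding int_comb_def sum_subtractf[symmetric] sum_distrib_left
      by (intro sum.cong) (auto simp: algebra_simps)
  qed
  then have "u * (x - int_comb m) = u * (x - int_comb n) + (u * of_nat c) * int_comb (\<lambda>\<beta>. n \<beta> div int c)"
    by (simp add: algebra_simps)
  also have "\<dots> \<in> D"
    by (rule subring_of_add[OF subring n subring_of_mult[OF subring u_mult_c int_comb_in_D]])
  finally show ?thesis using \<open>int_comb m \<in> reduced\<close> by blast
qed

end

lemma mult_power_diff_periodic:
  fixes u a :: "'b::ring_1"
  assumes A: "subring_of A" and a: "a \<in> A" and period: "u * (a ^ (j + d) - a ^ j) \<in> A"
  shows "u * (a ^ (j + q * d) - a ^ j) \<in> A"
proof (induction q)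
  case 0
  then show ?case using subring_of_zero[OF A] by simp
next
  case (Suc q)
  have "j + Suc q * d = (j + q * d) + d" by simp
  then have "u * (a ^ (j + Suc q * d) - a ^ j)
      = u * (a ^ (j + q * d) - a ^ j) * a ^ d + u * (a ^ (j + d) - a ^ j)"
    by (simp only: power_add) (simp add: algebra_simps)
  also have "\<dots> \<in> A"
    by (rule subring_of_add[OF A subring_of_mult[OF A Suc.IH subring_of_power[OF A a]] period])
  finally show ?case .
qed

lemma mult_power_diff_shift:
  fixes u a :: "'b::ring_1"
  assumes A: "subring_of A" and a: "a \<in> A" and diff: "u * (a ^ (j + d) - a ^ j) \<in> A"
    and "j \<le> m"
  shows "u * (a ^ (m + d) - a ^ m) \<in> A"
proof -
  have "(j + d) + (m - j) = m + d" and "j + (m - j) = m" using \<open>j \<le> m\<close> by simp_all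
  then have "a ^ (m + d) = a ^ (j + d) * a ^ (m - j)" and "a ^ m = a ^ j * a ^ (m - j)"
    by (metis power_add)+
  then have "u * (a ^ (m + d) - a ^ m) = u * (a ^ (j + d) - a ^ j) * a ^ (m - j)"
    by (simp add: left_diff_distrib mult.assoc)
  also have "\<dots> \<in> A" by (rule subring_of_mult[OF A diff subring_of_power[OF A a]])
  finally show ?thesis .
qed

text \<open>The period \<open>j - i\<close> divides \<open>N!\<close>.\<close>
lemma mult_power_fact_diff:
  fixes u a :: "'b::ring_1"
  assumes A: "subring_of A" and a: "a \<in> A" and diff: "u * (a ^ j - a ^ i) \<in> A"
    and "i < j" and "j \<le> N"
  shows "u * (a ^ (N + fact N) - a ^ N) \<in> A"
proof -
  have "j - i dvd fact N" using \<open>i < j\<close> \<open>j \<le> N\<close> by (intro dvd_fact) auto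
  then obtain q where q: "fact N = (j - i) * q" by (rule dvdE)
  have "u * (a ^ (i + (j - i)) - a ^ i) \<in> A" using diff \<open>i < j\<close> by simp
  then have "u * (a ^ (i + q * (j - i)) - a ^ i) \<in> A" by (rule mult_power_diff_periodic[OF A a])
  then have "u * (a ^ (N + q * (j - i)) - a ^ N) \<in> A"
    by (rule mult_power_diff_shift[OF A a]) (use \<open>i < j\<close> \<open>j \<le> N\<close> in simp)
  then show ?thesis by (simp add: q mult.commute)
qed

lemma pigeonhole_atMost:
  assumes "f ` {..N} \<subseteq> B" and "finite B" and "card B \<le> N"
  shows "\<exists>i j. i < j \<and> j \<le> N \<and> f i = f j"
proof -
  have "card (f ` {..N}) < card {..N}"
    using card_mono[OF assms(2,1)] assms(3) by simp
  then have "\<not> inj_on f {..N}" by (rule pigeonhole)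
  then obtain i j where "i \<le> N" "j \<le> N" "i \<noteq> j" "f i = f j" by (auto simp: inj_on_def)
  then show ?thesis by (metis linorder_neqE_nat)
qed

text \<open>Every element \<open>a\<close> stabilises a \<open>D\<close>-module \<open>D s\<^sub>0 + \<dots> + D s\<^sub>r\<^sub>-\<^sub>1 \<subseteq> A\<close> with \<open>r \<le> R\<close> that
  contains \<open>1\<close>; \<open>\<gamma>\<close> is the matrix of multiplication by \<open>a\<close>.\<close>
definition uniformly_presented :: "'k::field set \<Rightarrow> ('k \<Rightarrow> 'b::ring_1) \<Rightarrow> 'b set \<Rightarrow> nat \<Rightarrow> bool" where
  "uniformly_presented D \<phi> A R \<longleftrightarrow>
     (\<forall>a\<in>A. \<exists>r s \<gamma> \<delta>. r \<le> R \<and> (\<forall>l<r. s l \<in> A \<and> \<delta> l \<in> D) \<and> (\<forall>k<r. \<forall>l<r. \<gamma> k l \<in> D)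
        \<and> 1 = (\<Sum>l<r. \<phi> (\<delta> l) * s l) \<and> (\<forall>k<r. a * s k = (\<Sum>l<r. \<phi> (\<gamma> k l) * s l)))"

context monomial_reduction
begin

lemma powers_reducible:
  assumes \<phi>: "central_alg_map \<phi>"
    and one: "1 = (\<Sum>l<r. \<phi> (\<delta> l) * s l)" and act: "\<forall>k<r. a * s k = (\<Sum>l<r. \<phi> (\<gamma> k l) * s l)"
    and \<delta>: "\<forall>l<r. \<delta> l \<in> G" and \<gamma>: "\<forall>k<r. \<forall>l<r. \<gamma> k l \<in> G"
  shows "\<exists>v. (\<forall>l<r. reducible (v l)) \<and> a ^ j = (\<Sum>l<r. \<phi> (v l) * s l)"
proof (induction j)
  case 0
  show ?case using one \<delta> reducible_mult[OF reducible_one] by (intro exI[of _ \<delta>]) auto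
next
  case (Suc j)
  then obtain v where v: "\<forall>l<r. reducible (v l)" and pow: "a ^ j = (\<Sum>l<r. \<phi> (v l) * s l)" by blast
  define w where "w l = (\<Sum>k<r. v k * \<gamma> k l)" for l
  have "a ^ Suc j = (\<Sum>k<r. \<phi> (v k) * (a * s k))"
    unfolding power_Suc pow sum_distrib_left
    by (intro sum.cong refl) (simp add: mult.assoc[symmetric] central_alg_map_commute[OF \<phi>, of _ a])
  also have "\<dots> = (\<Sum>k<r. \<Sum>l<r. \<phi> (v k * \<gamma> k l) * s l)"
    using act by (simp add: sum_distrib_left central_alg_map_mult[OF \<phi>] mult.assoc)
  also have "\<dots> = (\<Sum>l<r. \<phi> (w l) * s l)"
    unfolding w_def by (subst sum.swap) (simp add: central_alg_map_sum[OF \<phi>] sum_distrib_right)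
  finally have "a ^ Suc j = (\<Sum>l<r. \<phi> (w l) * s l)" .
  moreover have "\<forall>l<r. reducible (w l)"
    unfolding w_def using v \<gamma> by (auto intro!: reducible_sum reducible_mult)
  ultimately show ?case by blast
qed

lemma reducible_pigeonhole:
  assumes v: "\<And>j l. l < r \<Longrightarrow> reducible (v j l)" and N: "card reduced ^ r \<le> N"
  obtains i j where "i < j" and "j \<le> N" and "\<forall>l<r. u * (v j l - v i l) \<in> D"
proof -
  define red where "red j = restrict (\<lambda>l. SOME e. e \<in> reduced \<and> u * (v j l - e) \<in> D) {..<r}" for j
  have red: "red j l \<in> reduced \<and> u * (v j l - red j l) \<in> D" if "l < r" for j l
    using someI_ex[OF reducible_imp_reduced[OF v[OF that], unfolded Bex_def]] that
    by (simp add: red_def)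
  have "red j \<in> PiE {..<r} (\<lambda>_. reduced)" for j
    using red unfolding PiE_iff by (auto simp: red_def)
  then have "red ` {..N} \<subseteq> PiE {..<r} (\<lambda>_. reduced)" by blast
  moreover have "card (PiE {..<r} (\<lambda>_. reduced)) \<le> N"
    using N by (simp add: card_PiE)
  ultimately obtain i j where "i < j" "j \<le> N" and same: "red i = red j"
    using pigeonhole_atMost finite_reduced by (metis finite_PiE finite_lessThan)
  have "u * (v j l - v i l) \<in> D" if "l < r" for l
  proof -
    have "u * (v j l - v i l) = u * (v j l - red j l) - u * (v i l - red i l)"
      using same by (simp add: algebra_simps)
    then show ?thesis using red[OF that] subring_of_diff[OF subring] by simp
  qed
  with \<open>i < j\<close> \<open>j \<le> N\<close> show ?thesis by (intro that) auto
qed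

lemma mult_power_fact_diff_in:
  assumes \<phi>: "central_alg_map \<phi>" and A: "subring_of A" and \<phi>D: "\<phi> ` D \<subseteq> A"
    and a: "a \<in> A" and s: "\<forall>l<r. s l \<in> A"
    and one: "1 = (\<Sum>l<r. \<phi> (\<delta> l) * s l)" and act: "\<forall>k<r. a * s k = (\<Sum>l<r. \<phi> (\<gamma> k l) * s l)"
    and \<delta>: "\<forall>l<r. \<delta> l \<in> G" and \<gamma>: "\<forall>k<r. \<forall>l<r. \<gamma> k l \<in> G"
    and N: "card reduced ^ r \<le> N"
  shows "\<phi> u * (a ^ (N + fact N) - a ^ N) \<in> A"
proof -
  have "\<forall>j. \<exists>v. (\<forall>l<r. reducible (v l)) \<and> a ^ j = (\<Sum>l<r. \<phi> (v l) * s l)"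
    using powers_reducible[OF \<phi> one act \<delta> \<gamma>] by blast
  then obtain v where v: "\<And>j l. l < r \<Longrightarrow> reducible (v j l)"
    and pow: "\<And>j. a ^ j = (\<Sum>l<r. \<phi> (v j l) * s l)"
    by metis
  obtain i j where "i < j" "j \<le> N" and close: "\<forall>l<r. u * (v j l - v i l) \<in> D"
    by (rule reducible_pigeonhole[OF v N])
  have "\<phi> u * (a ^ j - a ^ i) = (\<Sum>l<r. \<phi> (u * (v j l - v i l)) * s l)"
    unfolding pow by (simp add: central_alg_map_mult[OF \<phi>] central_alg_map_diff[OF \<phi>]
        sum_distrib_left sum_subtractf[symmetric] algebra_simps)
  also have "\<dots> \<in> A"
  proof (rule subring_of_sum[OF A])
    fix l assume "l \<in> {..<r}"
    then have "\<phi> (u * (v j l - v i l)) \<in> A" and "s l \<in> A" using close \<phi>D s by auto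
    then show "\<phi> (u * (v j l - v i l)) * s l \<in> A" by (rule subring_of_mult[OF A])
  qed
  finally show ?thesis
    by (rule mult_power_fact_diff[OF A a _ \<open>i < j\<close> \<open>j \<le> N\<close>])
qed

lemma card_reduced_power_le:
  assumes "card G \<le> M" and "r \<le> R"
  shows "card reduced ^ r \<le> (c ^ (degree T ^ M)) ^ R"
proof -
  have "card reduced ^ r \<le> (c ^ (degree T ^ card G)) ^ r"
    by (rule power_mono[OF card_reduced]) simp
  also have "\<dots> \<le> (c ^ (degree T ^ M)) ^ r"
    using c_pos degree_T_pos assms(1) by (intro power_mono power_increasing) auto
  also have "\<dots> \<le> (c ^ (degree T ^ M)) ^ R"
    using c_pos assms(2) by (intro power_increasing) auto
  finally show ?thesis .
qed

end

lemma card_matrix_entries_le: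
  "card (case_prod \<gamma> ` ({..<r} \<times> {..<r}) \<union> \<delta> ` {..<r}) \<le> r * r + r"
proof -
  have "card (case_prod \<gamma> ` ({..<r} \<times> {..<r}) \<union> \<delta> ` {..<r})
      \<le> card (case_prod \<gamma> ` ({..<r} \<times> {..<r})) + card (\<delta> ` {..<r})"
    by (rule card_Un_le)
  also have "\<dots> \<le> card ({..<r} \<times> {..<r}) + card {..<r}"
    by (intro add_mono card_image_le) auto
  finally show ?thesis by (simp add: card_cartesian_product)
qed

lemma (in denominator_witness) Int_K_neq_poly_over:
  assumes \<phi>: "central_alg_map \<phi>" and A: "subring_of A" and \<phi>D: "\<phi> ` D \<subseteq> A"
    and presented: "uniformly_presented D \<phi> A R"
  shows "Int_K \<phi> A \<noteq> poly_over D"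
proof -
  define N where "N = (c ^ (degree T ^ (R * R + R))) ^ R"
  define h where "h = monom u (N + fact N) - monom u N"
  have "h \<in> Int_K \<phi> A"
    unfolding Int_K_def
  proof (intro CollectI ballI)
    fix a assume a: "a \<in> A"
    with presented obtain r s \<gamma> \<delta> where "r \<le> R" and s\<delta>: "\<forall>l<r. s l \<in> A \<and> \<delta> l \<in> D"
      and \<gamma>: "\<forall>k<r. \<forall>l<r. \<gamma> k l \<in> D" and one: "1 = (\<Sum>l<r. \<phi> (\<delta> l) * s l)"
      and act: "\<forall>k<r. a * s k = (\<Sum>l<r. \<phi> (\<gamma> k l) * s l)"
      unfolding uniformly_presented_def by blast
    define G where "G = case_prod \<gamma> ` ({..<r} \<times> {..<r}) \<union> \<delta> ` {..<r}"
    interpret monomial_reduction D u c T G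
      using s\<delta> \<gamma> by unfold_locales (auto simp: G_def)
    have "r * r + r \<le> R * R + R" using \<open>r \<le> R\<close> by (intro add_mono mult_mono) auto
    then have "card G \<le> R * R + R"
      unfolding G_def by (rule order.trans[OF card_matrix_entries_le])
    then have "card reduced ^ r \<le> N"
      unfolding N_def using \<open>r \<le> R\<close> by (rule card_reduced_power_le)
    then have "\<phi> u * (a ^ (N + fact N) - a ^ N) \<in> A"
      using mult_power_fact_diff_in[OF \<phi> A \<phi>D a _ one act] s\<delta> \<gamma> by (auto simp: G_def)
    then show "peval \<phi> h a \<in> A"
      unfolding h_def by (simp add: peval_monom_diff[OF \<phi>])
  qed
  moreover have "coeff h (N + fact N) = u"
    by (simp add: h_def)
  then have "h \<notin> poly_over D"
    using u_notin unfolding poly_over_def by auto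
  ultimately show ?thesis by blast
qed

text \<open>The companion matrix of a monic \<open>p\<close> with \<open>p(a) = 0\<close> acts on the powers \<open>a\<^sup>l\<close>, \<open>l < degree p\<close>.\<close>
lemma companion_presentation:
  assumes \<phi>: "central_alg_map \<phi>" and A: "subring_of A" and D: "subring_of D"
    and a: "a \<in> A" and p: "p \<in> poly_over D" "lead_coeff p = 1" "peval \<phi> p a = 0"
  shows "\<exists>s \<gamma> \<delta>. (\<forall>l<degree p. s l \<in> A \<and> \<delta> l \<in> D) \<and> (\<forall>k<degree p. \<forall>l<degree p. \<gamma> k l \<in> D)
     \<and> 1 = (\<Sum>l<degree p. \<phi> (\<delta> l) * s l) \<and> (\<forall>k<degree p. a * s k = (\<Sum>l<degree p. \<phi> (\<gamma> k l) * s l))"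
proof -
  define m where "m = degree p"
  have "m > 0" and top_power: "a ^ m = (\<Sum>l<m. \<phi> (- coeff p l) * a ^ l)"
    unfolding m_def using p(2,3)
    by (rule degree_pos_if_peval_monic_eq_0[OF \<phi>], rule power_degree_if_peval_monic_eq_0[OF \<phi>])
  define \<delta> where "\<delta> l = (if l = 0 then 1 else 0 :: 'a)" for l :: nat
  define \<gamma> where "\<gamma> k l = (if Suc k < m then (if l = Suc k then 1 else 0) else - coeff p l)" for k l
  have "(\<Sum>l<m. \<phi> (\<delta> l) * a ^ l) = (\<Sum>l<m. if l = 0 then a ^ l else 0)"
    by (intro sum.cong) (auto simp: \<delta>_def central_alg_map_zero[OF \<phi>] central_alg_map_one[OF \<phi>])
  then have "1 = (\<Sum>l<m. \<phi> (\<delta> l) * a ^ l)"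
    using \<open>m > 0\<close> by simp
  moreover have "a * a ^ k = (\<Sum>l<m. \<phi> (\<gamma> k l) * a ^ l)" if "k < m" for k
  proof (cases "Suc k < m")
    case True
    then have "(\<Sum>l<m. \<phi> (\<gamma> k l) * a ^ l) = (\<Sum>l<m. if l = Suc k then a ^ l else 0)"
      by (intro sum.cong) (auto simp: \<gamma>_def central_alg_map_zero[OF \<phi>] central_alg_map_one[OF \<phi>])
    then show ?thesis using True by simp
  next
    case False
    with that have "Suc k = m" by simp
    then have "a * a ^ k = a ^ m" using power_Suc[of a k] by simp
    then show ?thesis using top_power False by (simp add: \<gamma>_def)
  qed
  moreover have "\<delta> l \<in> D" and "\<gamma> k l \<in> D" and "a ^ l \<in> A" for k l
    using p(1) D A a
    by (auto simp: \<delta>_def \<gamma>_def poly_over_def subring_of_zero subring_of_one subring_of_uminus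
        subring_of_power)
  ultimately show ?thesis
    unfolding m_def by (intro exI[of _ "\<lambda>l. a ^ l"] exI[of _ \<gamma>] exI[of _ \<delta>]) auto
qed

lemma uniformly_presented_if_integral_bounded_degree:
  assumes "central_alg_map \<phi>" and "subring_of A" and "subring_of D"
    and "integral_bounded_degree D \<phi> A"
  shows "\<exists>R. uniformly_presented D \<phi> A R"
proof -
  obtain n where n: "\<forall>a\<in>A. \<exists>p. p \<in> poly_over D \<and> lead_coeff p = 1 \<and> degree p \<le> n \<and> peval \<phi> p a = 0"
    using assms(4) unfolding integral_bounded_degree_def by blast
  have "uniformly_presented D \<phi> A n"
    unfolding uniformly_presented_def
  proof
    fix a assume "a \<in> A"
    with n obtain p where p: "p \<in> poly_over D" "lead_coeff p = 1" "degree p \<le> n" "peval \<phi> p a = 0"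
      by blast
    then obtain s \<gamma> \<delta> where "(\<forall>l<degree p. s l \<in> A \<and> \<delta> l \<in> D)"
      "(\<forall>k<degree p. \<forall>l<degree p. \<gamma> k l \<in> D)" "1 = (\<Sum>l<degree p. \<phi> (\<delta> l) * s l)"
      "(\<forall>k<degree p. a * s k = (\<Sum>l<degree p. \<phi> (\<gamma> k l) * s l))"
      using companion_presentation[OF assms(1-3) \<open>a \<in> A\<close> p(1,2,4)] by blast
    with p(3) show "\<exists>r s \<gamma> \<delta>. r \<le> n \<and> (\<forall>l<r. s l \<in> A \<and> \<delta> l \<in> D)
        \<and> (\<forall>k<r. \<forall>l<r. \<gamma> k l \<in> D) \<and> 1 = (\<Sum>l<r. \<phi> (\<delta> l) * s l)
        \<and> (\<forall>k<r. a * s k = (\<Sum>l<r. \<phi> (\<gamma> k l) * s l))"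
      by (intro exI[of _ "degree p"] exI[of _ s] exI[of _ \<gamma>] exI[of _ \<delta>]) simp
  qed
  then show ?thesis ..
qed

lemma uniformly_presented_if_fin_gen_module:
  assumes A: "subring_of A" and "fin_gen_module D \<phi> A"
  shows "\<exists>R. uniformly_presented D \<phi> A R"
proof -
  obtain S where "finite S" "S \<subseteq> A"
    and span: "\<forall>x\<in>A. \<exists>c. (\<forall>s\<in>S. c s \<in> D) \<and> x = (\<Sum>s\<in>S. \<phi> (c s) * s)"
    using assms(2) unfolding fin_gen_module_def by blast
  obtain e where e: "bij_betw e {..<card S} S"
    using ex_bij_betw_nat_finite[OF \<open>finite S\<close>] unfolding atLeast0LessThan by blast
  define R where "R = card S"
  have eS: "e l \<in> S" if "l < R" for l
    using bij_betwE[OF e] that unfolding R_def by blast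
  then have eA: "e l \<in> A" if "l < R" for l
    using \<open>S \<subseteq> A\<close> that by blast
  have span_e: "\<exists>c. (\<forall>l<R. c l \<in> D) \<and> x = (\<Sum>l<R. \<phi> (c l) * e l)" if "x \<in> A" for x
  proof -
    obtain c where c: "\<forall>s\<in>S. c s \<in> D" and x: "x = (\<Sum>s\<in>S. \<phi> (c s) * s)"
      using bspec[OF span \<open>x \<in> A\<close>] by blast
    have "(\<Sum>s\<in>S. \<phi> (c s) * s) = (\<Sum>l<R. \<phi> (c (e l)) * e l)"
      unfolding R_def by (rule sum.reindex_bij_betw[OF e, symmetric])
    moreover have "\<forall>l<R. c (e l) \<in> D" using c eS by blast
    ultimately show ?thesis using x by (intro exI[of _ "c \<circ> e"]) simp
  qed
  have "uniformly_presented D \<phi> A R"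
    unfolding uniformly_presented_def
  proof
    fix a assume "a \<in> A"
    obtain \<delta> where \<delta>: "(\<forall>l<R. \<delta> l \<in> D) \<and> 1 = (\<Sum>l<R. \<phi> (\<delta> l) * e l)"
      using span_e[OF subring_of_one[OF A]] by blast
    have "\<forall>k<R. \<exists>c. (\<forall>l<R. c l \<in> D) \<and> a * e k = (\<Sum>l<R. \<phi> (c l) * e l)"
      using span_e subring_of_mult[OF A \<open>a \<in> A\<close> eA] by blast
    then obtain \<gamma> where "\<forall>k<R. (\<forall>l<R. \<gamma> k l \<in> D) \<and> a * e k = (\<Sum>l<R. \<phi> (\<gamma> k l) * e l)"
      by metis
    then show "\<exists>r s \<gamma> \<delta>. r \<le> R \<and> (\<forall>l<r. s l \<in> A \<and> \<delta> l \<in> D)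
        \<and> (\<forall>k<r. \<forall>l<r. \<gamma> k l \<in> D) \<and> 1 = (\<Sum>l<r. \<phi> (\<delta> l) * s l)
        \<and> (\<forall>k<r. a * s k = (\<Sum>l<r. \<phi> (\<gamma> k l) * s l))"
      using \<delta> eA by (intro exI[of _ R] exI[of _ e] exI[of _ \<gamma>] exI[of _ \<delta>]) auto
  qed
  then show ?thesis ..
qed

theorem mainTheorem3:
  fixes D :: "'k::field set" and \<phi> :: "'k \<Rightarrow> 'b::ring_1" and A :: "'b set"
  assumes "subring_of D"
    and "is_fraction_field_of D"
    and "central_alg_map \<phi>"
    and "standard_assumptions D \<phi> A"
  shows "(integral_bounded_degree D \<phi> A \<longrightarrow>
            (Int_K \<phi> A \<noteq> poly_over D \<longleftrightarrow> Int_D D \<noteq> poly_over D))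
       \<and> (fin_gen_module D \<phi> A \<longrightarrow>
            (Int_K \<phi> A \<noteq> poly_over D \<longleftrightarrow> Int_D D \<noteq> poly_over D))"
proof -
  note D = assms(1) and \<phi> = assms(3)
  have A: "subring_of A" and \<phi>D: "\<phi> ` D \<subseteq> A" and DA: "{k. \<phi> k \<in> A} = D"
    using assms(4) unfolding standard_assumptions_def by auto
  have "poly_over D \<subseteq> Int_K \<phi> A" and "Int_K \<phi> A \<subseteq> Int_D D"
    by (rule poly_over_subset_Int_K[OF A \<phi>D], rule Int_K_subset_Int_D[OF \<phi> \<phi>D DA])
  then have only_if: "Int_K \<phi> A \<noteq> poly_over D \<Longrightarrow> Int_D D \<noteq> poly_over D" by blast
  have "Int_K \<phi> A \<noteq> poly_over D \<longleftrightarrow> Int_D D \<noteq> poly_over D" if "uniformly_presented D \<phi> A R" for R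
    using only_if denominator_witness.Int_K_neq_poly_over[OF _ \<phi> A \<phi>D that]
      denominator_witness_if_Int_D_neq_poly_over[OF D] by blast
  then show ?thesis
    using uniformly_presented_if_integral_bounded_degree[OF \<phi> A D]
      uniformly_presented_if_fin_gen_module[OF A] by blast
qed

end
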